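(* For every integer $k\geq 6$, \[ H^+(k+1,k) = \{ 2^{k-1} + 2^{k-5} + 2^{k-6},\ 2^{k-1} + 2^{k-3},\ 2^{k-1} + 2^{k-2},\ 2^{k}\}.\]
   Context: Let $\mathbb{H}^n=\{0,1\}^n\subseteq\mathbb{R}^n$. For $n\geq k$, $H(n,k)=\{\,|\mathbb{H}^k\cap L^{-1}(\mathbb{H}^{n-k})| : L:\mathbb{R}^k\to\mathbb{R}^{n-k}\text{ linear}\,\}$ (equivalently, the set of possible sizes of intersections of a $k$-dimensional linear subspace of $\mathbb{R}^n$ with $\mathbb{H}^n$), and $H^+(n,k)=H(n,k)\setminus\{1,\dots,2^{k-1}\}$. *)

theory Defs
  imports Complex_Main
begin

text \<open>The discrete cube {0,1}^k inside R^k, with vectors of R^k represented as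
  functions nat => real that vanish at indices >= k.\<close>
definition cube :: "nat \<Rightarrow> (nat \<Rightarrow> real) set" where
  "cube k = {x. (\<forall>i<k. x i \<in> {0, 1}) \<and> (\<forall>i\<ge>k. x i = 0)}"

text \<open>A linear map L : R^k -> R^m is given by its matrix A (entries A i j, i<m, j<k);
  (L x)_i = sum_{j<k} A i j * x j.\<close>
definition H :: "nat \<Rightarrow> nat \<Rightarrow> nat set" where
  "H n k = {card {x \<in> cube k. \<forall>i<n - k. (\<Sum>j<k. A i j * x j) \<in> {0, 1}} | A :: nat \<Rightarrow> nat \<Rightarrow> real. True}"

definition Hplus :: "nat \<Rightarrow> nat \<Rightarrow> nat set" where
  "Hplus n k = H n k - {1..2^(k-1)}"

end

theory Submission
  imports Defs "HOL-Library.Indicator_Function"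
begin

text \<open>A vertex of the cube is a subset S of {..<k}, and for a single linear form a it is
  counted iff sum a S is 0 or 1. If some coefficient a j lies outside {-1, 0, 1}, then S and
  insert j S are never both counted, so at most half of the cube is. Otherwise, with z zero,
  p positive and n negative coefficients, Pascal's rule gives the count
  2^z * (p + n + 1 choose n + 1). Hence the part of H(k+1,k) above 2^(k-1) consists of the
  numbers 2^(k-m) * (m + 1 choose n + 1) with n <= m <= k and 2^m < 2 * (m + 1 choose n + 1).
  The last condition forces m <= 7, leaving finitely many binomial coefficients to inspect.\<close>

lemma card_subsets_insert:
  assumes "finite A" "x \<notin> A"
  shows "card {S. S \<subseteq> insert x A \<and> P S} =
         card {S. S \<subseteq> A \<and> P S} + card {S. S \<subseteq> A \<and> P (insert x S)}"
proof -
  have split: "{S. S \<subseteq> insert x A \<and> P S} =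
      {S. S \<subseteq> A \<and> P S} \<union> insert x ` {S. S \<subseteq> A \<and> P (insert x S)}"
  proof (intro set_eqI iffI)
    fix S assume S: "S \<in> {S. S \<subseteq> insert x A \<and> P S}"
    show "S \<in> {S. S \<subseteq> A \<and> P S} \<union> insert x ` {S. S \<subseteq> A \<and> P (insert x S)}"
    proof (cases "x \<in> S")
      case True
      then have "S = insert x (S - {x})" "S - {x} \<subseteq> A" using S by auto
      then show ?thesis using S by (metis (mono_tags, lifting) Un_iff image_eqI mem_Collect_eq)
    qed (use S in auto)
  qed (use assms(2) in auto)
  have "inj_on (insert x) {S. S \<subseteq> A \<and> P (insert x S)}"
    using assms(2) by (intro inj_onI) (metis insert_ident mem_Collect_eq subset_eq)
  moreover have "{S. S \<subseteq> A \<and> P S} \<inter> insert x ` {S. S \<subseteq> A \<and> P (insert x S)} = {}"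
    using assms(2) by auto
  ultimately show ?thesis
    unfolding split using assms(1) by (simp add: card_Un_disjoint card_image)
qed

lemma cube_eq_indicator_image: "cube k = indicator ` Pow {..<k}"
proof (intro equalityI subsetI)
  fix x assume x: "x \<in> cube k"
  have "x i = indicator {i. i < k \<and> x i = 1} i" for i
    using x by (cases "i < k") (auto simp: cube_def indicator_def)
  then have "x = indicator {i. i < k \<and> x i = 1}" ..
  then show "x \<in> indicator ` Pow {..<k}" by blast
qed (auto simp: cube_def indicator_def)

lemma inj_indicator: "inj (indicator :: 'a set \<Rightarrow> 'a \<Rightarrow> real)"
  by (intro injI set_eqI) (metis indicator_eq_1_iff)

definition zero_one_count :: "(nat \<Rightarrow> real) \<Rightarrow> nat \<Rightarrow> nat" where
  "zero_one_count a k = card {S. S \<subseteq> {..<k} \<and> sum a S \<in> {0, 1}}"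

lemma H_Suc_eq_range_zero_one_count: "H (Suc k) k = range (\<lambda>a. zero_one_count a k)"
proof -
  have "card {x \<in> cube k. \<forall>i<Suc k - k. (\<Sum>j<k. A i j * x j) \<in> {0, 1}} =
      zero_one_count (A 0) k" for A :: "nat \<Rightarrow> nat \<Rightarrow> real"
  proof -
    have "(\<Sum>j<k. A 0 j * indicator S j) = sum (A 0) S" if "S \<subseteq> {..<k}" for S
      using that by (simp add: sum.If_cases indicator_def Int_absorb1)
    then have "{x \<in> cube k. \<forall>i<Suc k - k. (\<Sum>j<k. A i j * x j) \<in> {0, 1}}
        = indicator ` {S. S \<subseteq> {..<k} \<and> sum (A 0) S \<in> {0, 1}}"
      unfolding cube_eq_indicator_image by auto
    then show ?thesis
      unfolding zero_one_count_def by (simp add: card_image inj_on_subset[OF inj_indicator])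
  qed
  then show ?thesis
    unfolding H_def by (auto intro: exI[of _ "\<lambda>_. a" for a])
qed

lemma zero_one_count_pos: "0 < zero_one_count a k"
proof -
  have "{} \<in> {S. S \<subseteq> {..<k} \<and> sum a S \<in> {0, 1}}" by simp
  then show ?thesis unfolding zero_one_count_def by (subst card_gt_0_iff) auto
qed

lemma zero_one_count_le_half_if_not_ternary:
  assumes "j < k" "a j \<notin> {-1, 0, 1}"
  shows "zero_one_count a k \<le> 2 ^ (k - 1)"
proof -
  let ?F = "{S. S \<subseteq> {..<k} \<and> sum a S \<in> {0, 1}}"
  have fin: "finite S" if "S \<in> ?F" for S
    using that finite_subset by blast
  have no_pair: False if "T \<in> ?F" "insert j T \<in> ?F" "j \<notin> T" for T
  proof -
    have "sum a (insert j T) = a j + sum a T" using fin[OF that(1)] that(3) by simp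
    then show False using that(1,2) assms(2) by auto
  qed
  have "inj_on (\<lambda>S. S - {j}) ?F"
  proof (rule inj_onI)
    fix S T assume S: "S \<in> ?F" and T: "T \<in> ?F" and eq: "S - {j} = T - {j}"
    have "j \<in> S \<longleftrightarrow> j \<in> T"
    proof
      assume "j \<in> S"
      then have "S = insert j T" if "j \<notin> T" using eq that by blast
      then show "j \<in> T" using no_pair[of T] S T by blast
    next
      assume "j \<in> T"
      then have "T = insert j S" if "j \<notin> S" using eq that by blast
      then show "j \<in> S" using no_pair[of S] S T by blast
    qed
    then show "S = T" using eq by blast
  qed
  moreover have "(\<lambda>S. S - {j}) ` ?F \<subseteq> Pow ({..<k} - {j})" by auto
  ultimately have "card ?F \<le> card (Pow ({..<k} - {j}))"
    by (intro card_inj_on_le) auto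
  also have "\<dots> = 2 ^ (k - 1)" using assms(1) by (simp add: card_Pow)
  finally show ?thesis unfolding zero_one_count_def .
qed

definition level_count :: "(nat \<Rightarrow> real) \<Rightarrow> nat \<Rightarrow> real \<Rightarrow> nat" where
  "level_count a k v = card {S. S \<subseteq> {..<k} \<and> sum a S = v}"

lemma level_count_0: "level_count a 0 v = (if v = 0 then 1 else 0)"
proof -
  have "{S. S \<subseteq> {..<0} \<and> sum a S = v} = (if v = 0 then {{}} else {})" by auto
  then show ?thesis unfolding level_count_def by simp
qed

lemma level_count_Suc: "level_count a (Suc k) v = level_count a k v + level_count a k (v - a k)"
proof -
  have "level_count a (Suc k) v =
      level_count a k v + card {S. S \<subseteq> {..<k} \<and> sum a (insert k S) = v}"
    unfolding level_count_def lessThan_Suc by (rule card_subsets_insert) auto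
  also have "{S. S \<subseteq> {..<k} \<and> sum a (insert k S) = v} =
      {S. S \<subseteq> {..<k} \<and> sum a S = v - a k}"
  proof (rule Collect_cong)
    fix S
    have "sum a (insert k S) = a k + sum a S" if "S \<subseteq> {..<k}"
      using that finite_subset[OF that] by (subst sum.insert) auto
    then show "(S \<subseteq> {..<k} \<and> sum a (insert k S) = v) \<longleftrightarrow>
        (S \<subseteq> {..<k} \<and> sum a S = v - a k)"
      by auto
  qed
  finally show ?thesis unfolding level_count_def .
qed

lemma zero_one_count_eq_level_counts: "zero_one_count a k = level_count a k 0 + level_count a k 1"
proof -
  have "{S. S \<subseteq> {..<k} \<and> sum a S \<in> {0, 1}} =
      {S. S \<subseteq> {..<k} \<and> sum a S = 0} \<union> {S. S \<subseteq> {..<k} \<and> sum a S = 1}" by auto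
  then show ?thesis
    unfolding zero_one_count_def level_count_def by (simp add: card_Un_disjoint disjoint_iff)
qed

definition value_count :: "(nat \<Rightarrow> real) \<Rightarrow> real \<Rightarrow> nat \<Rightarrow> nat" where
  "value_count a c k = card {j. j < k \<and> a j = c}"

lemma value_count_0 [simp]: "value_count a c 0 = 0"
  by (simp add: value_count_def)

lemma value_count_Suc [simp]:
  "value_count a c (Suc k) = value_count a c k + (if a k = c then 1 else 0)"
proof -
  have "{j. j < Suc k \<and> a j = c} = (if a k = c then insert k else id) {j. j < k \<and> a j = c}"
    by (auto simp: less_Suc_eq)
  then show ?thesis unfolding value_count_def by simp
qed

lemma value_count_sum_ternary:
  assumes "\<forall>j<k. a j \<in> {-1, 0, 1}"
  shows "value_count a 0 k + value_count a 1 k + value_count a (-1) k = k"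
  using assms by (induction k) auto

definition choose_int :: "nat \<Rightarrow> int \<Rightarrow> nat" where
  "choose_int m v = (if v < 0 then 0 else m choose nat v)"

lemma choose_int_Suc: "choose_int (Suc m) v = choose_int m v + choose_int m (v - 1)"
proof (cases "v \<le> 0")
  case True
  then show ?thesis by (cases "v = 0") (auto simp: choose_int_def)
next
  case False
  then have "nat v = Suc (nat (v - 1))" by simp
  then show ?thesis using False by (simp add: choose_int_def)
qed

lemma level_count_ternary:
  assumes "\<forall>j<k. a j \<in> {-1, 0, 1}"
  shows "level_count a k (of_int v) = 2 ^ value_count a 0 k *
    choose_int (value_count a 1 k + value_count a (-1) k) (int (value_count a (-1) k) + v)"
  using assms
proof (induction k arbitrary: v)
  case 0
  then show ?case by (simp add: level_count_0 choose_int_def)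
next
  case (Suc k)
  let ?z = "value_count a 0 k" and ?p = "value_count a 1 k" and ?n = "value_count a (-1) k"
  have IH: "level_count a k (of_int w) = 2 ^ ?z * choose_int (?p + ?n) (int ?n + w)" for w
    using Suc by simp
  consider "a k = 0" | "a k = 1" | "a k = -1" using Suc.prems by auto
  then show ?case
  proof cases
    case 1
    then show ?thesis by (simp add: level_count_Suc IH)
  next
    case 2
    then have "level_count a (Suc k) (of_int v) =
        level_count a k (of_int v) + level_count a k (of_int (v - 1))"
      by (simp add: level_count_Suc)
    also have "\<dots> = 2 ^ ?z * choose_int (Suc (?p + ?n)) (int ?n + v)"
      by (simp only: IH) (simp add: choose_int_Suc algebra_simps)
    finally show ?thesis using 2 by simp
  next
    case 3
    then have "level_count a (Suc k) (of_int v) =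
        level_count a k (of_int v) + level_count a k (of_int (v + 1))"
      by (simp add: level_count_Suc)
    also have "\<dots> = 2 ^ ?z * choose_int (Suc (?p + ?n)) (int ?n + v + 1)"
      by (simp only: IH) (simp add: choose_int_Suc algebra_simps)
    finally show ?thesis using 3 by (simp add: algebra_simps)
  qed
qed

lemma zero_one_count_ternary:
  assumes "\<forall>j<k. a j \<in> {-1, 0, 1}"
  shows "zero_one_count a k = 2 ^ value_count a 0 k *
    (Suc (value_count a 1 k + value_count a (-1) k) choose Suc (value_count a (-1) k))"
proof -
  let ?m = "value_count a 1 k + value_count a (-1) k" and ?n = "value_count a (-1) k"
  have "zero_one_count a k = level_count a k (of_int 0) + level_count a k (of_int 1)"
    by (simp add: zero_one_count_eq_level_counts)
  also have "\<dots> = 2 ^ value_count a 0 k * choose_int (Suc ?m) (int ?n + 1)"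
    by (simp only: level_count_ternary[OF assms] choose_int_Suc) (simp add: algebra_simps)
  also have "choose_int (Suc ?m) (int ?n + 1) = Suc ?m choose Suc ?n"
    by (simp add: choose_int_def nat_add_distrib)
  finally show ?thesis .
qed

lemma zero_one_count_ternary_values:
  "{zero_one_count a k | a. \<forall>j<k. a j \<in> {-1, 0, 1}} =
   {2 ^ (k - m) * (Suc m choose Suc n) | m n. n \<le> m \<and> m \<le> k}"
proof (intro equalityI subsetI)
  fix c assume "c \<in> {zero_one_count a k | a. \<forall>j<k. a j \<in> {-1, 0, 1}}"
  then obtain a where a: "\<forall>j<k. a j \<in> {-1, 0, 1}" and c: "c = zero_one_count a k" by blast
  let ?m = "value_count a 1 k + value_count a (-1) k" and ?n = "value_count a (-1) k"
  have "c = 2 ^ (k - ?m) * (Suc ?m choose Suc ?n)" "?m \<le> k"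
    using c zero_one_count_ternary[OF a] value_count_sum_ternary[OF a] by auto
  then show "c \<in> {2 ^ (k - m) * (Suc m choose Suc n) | m n. n \<le> m \<and> m \<le> k}"
    unfolding mem_Collect_eq by (intro exI[of _ ?m] exI[of _ ?n]) simp
next
  fix c assume "c \<in> {2 ^ (k - m) * (Suc m choose Suc n) | m n. n \<le> m \<and> m \<le> k}"
  then obtain m n where mn: "n \<le> m" "m \<le> k" and c: "c = 2 ^ (k - m) * (Suc m choose Suc n)"
    by blast
  define a :: "nat \<Rightarrow> real"
    where "a j = (if j < m - n then 1 else if j < m then -1 else 0)" for j
  have "{j. j < k \<and> a j = 1} = {..<m - n}" "{j. j < k \<and> a j = -1} = {m - n..<m}"
    "{j. j < k \<and> a j = 0} = {m..<k}"
    using mn by (auto simp: a_def)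
  then have "value_count a 1 k = m - n" "value_count a (-1) k = n" "value_count a 0 k = k - m"
    using mn by (simp_all add: value_count_def)
  moreover have a_ternary: "\<forall>j<k. a j \<in> {-1, 0, 1}" by (simp add: a_def)
  ultimately have "zero_one_count a k = 2 ^ (k - m) * (Suc (m - n + n) choose Suc n)"
    using zero_one_count_ternary by simp
  then have "zero_one_count a k = c" using mn c by simp
  then show "c \<in> {zero_one_count a k | a. \<forall>j<k. a j \<in> {-1, 0, 1}}"
    unfolding mem_Collect_eq using a_ternary by (intro exI[of _ a]) simp
qed

lemma pow_pred_less_iff:
  fixes k m C :: nat
  assumes "1 \<le> k" "m \<le> k"
  shows "2 ^ (k - 1) < 2 ^ (k - m) * C \<longleftrightarrow> 2 ^ m < 2 * C"
proof -
  have "2 ^ (k - 1) * 2 = (2::nat) ^ k" using assms(1) by (cases k) auto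
  then have lhs: "2 ^ (k - 1) * (2 * 2 ^ m) = 2 ^ k * (2 ^ m :: nat)" by (metis mult.assoc)
  have "2 ^ (k - m) * 2 ^ m = (2::nat) ^ k" using assms(2) by (simp add: power_add[symmetric])
  then have rhs: "2 ^ (k - m) * C * (2 * 2 ^ m) = 2 ^ k * (2 * C :: nat)"
    by (metis mult.assoc mult.commute mult.left_commute)
  have "2 ^ (k - 1) < 2 ^ (k - m) * C \<longleftrightarrow>
      2 ^ (k - 1) * (2 * 2 ^ m) < 2 ^ (k - m) * C * (2 * 2 ^ m)"
    by (simp only: mult_less_cancel2) simp
  also have "\<dots> \<longleftrightarrow> 2 ^ m < 2 * C" unfolding lhs rhs by simp
  finally show ?thesis .
qed

lemma Hplus_Suc:
  assumes "1 \<le> k"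
  shows "Hplus (Suc k) k =
    {2 ^ (k - m) * (Suc m choose Suc n) | m n.
      n \<le> m \<and> m \<le> k \<and> 2 ^ m < 2 * (Suc m choose Suc n)}"
proof -
  have "Hplus (Suc k) k = {c \<in> range (\<lambda>a. zero_one_count a k). 2 ^ (k - 1) < c}"
    unfolding Hplus_def H_Suc_eq_range_zero_one_count using zero_one_count_pos
    by (auto simp: Suc_le_eq)
  also have "\<dots> = {c \<in> {zero_one_count a k | a. \<forall>j<k. a j \<in> {-1, 0, 1}}. 2 ^ (k - 1) < c}"
  proof -
    have "\<forall>j<k. a j \<in> {-1, 0, 1}" if "2 ^ (k - 1) < zero_one_count a k" for a
      using that zero_one_count_le_half_if_not_ternary[of _ k a] by (meson leD)
    then show ?thesis by blast
  qed
  also have "\<dots> = {2 ^ (k - m) * (Suc m choose Suc n) | m n.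
      n \<le> m \<and> m \<le> k \<and> 2 ^ m < 2 * (Suc m choose Suc n)}"
    unfolding zero_one_count_ternary_values using pow_pred_less_iff[OF assms]
    by (auto simp del: binomial_Suc_Suc)
  finally show ?thesis .
qed

lemma double_binomial_le_pow:
  assumes "8 \<le> m"
  shows "2 * (Suc m choose j) \<le> 2 ^ m"
  using assms
proof (induction m arbitrary: j rule: dec_induct)
  case base
  have "9 choose j \<le> 9 choose 4" using binomial_maximum[of 9 j] by simp
  also have "(9::nat) choose 4 = 126" by (simp add: binomial_fact' fact_numeral)
  finally show ?case by simp
next
  case (step m)
  show ?case
  proof (cases j)
    case 0
    then show ?thesis using step.hyps by (simp add: Suc_le_eq)
  next
    case (Suc i)
    then have "2 * (Suc (Suc m) choose j) = 2 * (Suc m choose i) + 2 * (Suc m choose Suc i)"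
      by simp
    also have "\<dots> \<le> 2 ^ Suc m" using step.IH[of i] step.IH[of "Suc i"] by simp
    finally show ?thesis .
  qed
qed

lemma binomial_ratio_cases:
  fixes m n :: nat
  assumes "n \<le> m" "2 ^ m < 2 * (Suc m choose Suc n)"
  shows "64 * (Suc m choose Suc n) \<in> {35 * 2 ^ m, 40 * 2 ^ m, 48 * 2 ^ m, 64 * 2 ^ m}"
proof -
  have "m \<le> 7" using double_binomial_le_pow[of m "Suc n"] assms(2) by (cases "8 \<le> m") auto
  then have "m \<in> {0, 1, 2, 3, 4, 5, 6, 7}" "n \<in> {0, 1, 2, 3, 4, 5, 6, 7}" using assms(1) by auto
  then show ?thesis using assms
    by (auto simp: binomial_fact' binomial_eq_0 fact_numeral numeral_2_eq_2 [symmetric]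
        simp del: binomial_Suc_Suc)
qed

lemma scaled_binomials_above_half:
  fixes k :: nat
  assumes "6 \<le> k"
  shows "{2 ^ (k - m) * (Suc m choose Suc n) | m n.
      n \<le> m \<and> m \<le> k \<and> 2 ^ m < 2 * (Suc m choose Suc n)} =
    (\<lambda>d. d * 2 ^ (k - 6)) ` {35, 40, 48, 64}" (is "?R = _")
proof (intro equalityI subsetI)
  fix c assume "c \<in> ?R"
  then obtain m n where mn: "n \<le> m" "m \<le> k" "2 ^ m < 2 * (Suc m choose Suc n)"
    and c: "c = 2 ^ (k - m) * (Suc m choose Suc n)" by blast
  obtain d where d: "d \<in> {35, 40, 48, 64}" "64 * (Suc m choose Suc n) = d * 2 ^ m"
    using binomial_ratio_cases[OF mn(1,3)] by blast
  have "(2::nat) ^ (k - m) * 2 ^ m = 2 ^ k" using mn(2) by (simp add: power_add[symmetric])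
  also have "\<dots> = 2 ^ (k - 6) * 2 ^ 6" using assms by (metis le_add_diff_inverse2 power_add)
  finally have "(2::nat) ^ (k - m) * 2 ^ m = 2 ^ (k - 6) * 64" by simp
  then have "c * 2 ^ m = 2 ^ (k - 6) * 64 * (Suc m choose Suc n)"
    unfolding c by (metis mult.assoc mult.commute)
  also have "\<dots> = d * 2 ^ (k - 6) * 2 ^ m" using d(2) by (metis mult.assoc mult.commute)
  finally show "c \<in> (\<lambda>d. d * 2 ^ (k - 6)) ` {35, 40, 48, 64}" using d(1) by simp
next
  obtain k0 where k: "k = k0 + 6" using assms by (metis add.commute le_Suc_ex)
  have witness: "2 ^ (k - m) * (Suc m choose Suc n) \<in> ?R"
    if "n \<le> m" "m \<le> 6" "2 ^ m < 2 * (Suc m choose Suc n)" for m n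
    unfolding mem_Collect_eq using that assms by (intro exI[of _ m] exI[of _ n]) simp
  have mem: "2 ^ (k - 6) * (Suc 6 choose Suc 3) \<in> ?R" "2 ^ (k - 4) * (Suc 4 choose Suc 2) \<in> ?R"
    "2 ^ (k - 2) * (Suc 2 choose Suc 0) \<in> ?R" "2 ^ (k - 0) * (Suc 0 choose Suc 0) \<in> ?R"
    by (intro witness; simp add: binomial_fact' fact_numeral del: binomial_Suc_Suc)+
  have val: "2 ^ (k - 6) * (Suc 6 choose Suc 3) = 35 * 2 ^ (k - 6)"
    "2 ^ (k - 4) * (Suc 4 choose Suc 2) = 40 * 2 ^ (k - 6)"
    "2 ^ (k - 2) * (Suc 2 choose Suc 0) = 48 * 2 ^ (k - 6)"
    "2 ^ (k - 0) * (Suc 0 choose Suc 0) = 64 * 2 ^ (k - 6)"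
    unfolding k by (simp_all add: binomial_fact' fact_numeral power_add del: binomial_Suc_Suc)
  show "c \<in> ?R" if "c \<in> (\<lambda>d. d * 2 ^ (k - 6)) ` {35, 40, 48, 64}" for c
    using that mem[unfolded val] by blast
qed

theorem corollary3p3:
  fixes k :: nat
  assumes "k \<ge> 6"
  shows "Hplus (k + 1) k =
    {2^(k-1) + 2^(k-5) + 2^(k-6), 2^(k-1) + 2^(k-3), 2^(k-1) + 2^(k-2), 2^k}"
proof -
  obtain k0 where k: "k = k0 + 6" using assms by (metis add.commute le_Suc_ex)
  have "Hplus (k + 1) k = (\<lambda>d. d * 2 ^ (k - 6)) ` {35, 40, 48, 64}"
    using Hplus_Suc[of k] scaled_binomials_above_half[OF assms] assms by simp
  also have "\<dots> = {2^(k-1) + 2^(k-5) + 2^(k-6), 2^(k-1) + 2^(k-3), 2^(k-1) + 2^(k-2), 2^k}"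
    unfolding k by (simp add: power_add mult.commute)
  finally show ?thesis .
qed

end
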